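(* Let $n\ge1$, $d\ge0$ be integers and let $A=(\mathbf{a}_0,\dots,\mathbf{a}_N)$ be $N+1=N(n,d)$ distinct points of $\mathbb{R}^n$. Then: (1) For each fixed $p\in\{1,\dots,n\}$, $\operatorname{Det}V(A)$, viewed as a polynomial in the coordinates of $\mathbf{a}_0,\dots,\mathbf{a}_N$, is homogeneous of degree $N(n+1,d-1)$ with respect to the $p$-th coordinates of the points $\mathbf{a}_0,\dots,\mathbf{a}_N$. (2) If $\varphi:\mathbb{R}^n\to\mathbb{R}^n$ is a linear transformation with matrix $P$, then $\operatorname{Det}V(\varphi(A))=(\operatorname{Det}P)^{N(n+1,d-1)}\operatorname{Det}V(A)$, where $\varphi(A)=(\varphi(\mathbf{a}_0),\dots,\varphi(\mathbf{a}_N))$. (3) For every $\mathbf{v}\in\mathbb{R}^n$, $\operatorname{Det}V(A-\mathbf{v})=\operatorname{Det}V(A)$, where $A-\mathbf{v}=(\mathbf{a}_0-\mathbf{v},\dots,\mathbf{a}_N-\mathbf{v})$.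
   Context: $N(a,b):=\binom{a+b}{b}$, with $N(a,-1):=0$. $I(n,d)$ is the set of multi-indices $\mathbf{j}\in\mathbb{Z}_{\ge0}^n$ with $|\mathbf{j}|\le d$, and $\mathbf{x}^{\mathbf{j}}=x_1^{j_1}\cdots x_n^{j_n}$. With a fixed ordering $\mathbf{j}_0,\dots,\mathbf{j}_N$ of $I(n,d)$, the ($n$-dimensional) Vandermonde matrix of an ordered tuple $A=(\mathbf{a}_0,\dots,\mathbf{a}_N)$ is $V(A)=(\mathbf{a}_i^{\mathbf{j}_l})_{0\le i,l\le N}$ (rows indexed by points, columns by exponents). *)

theory Defs
  imports "Jordan_Normal_Form.Determinant"
begin

definition NN :: "nat \<Rightarrow> nat \<Rightarrow> nat" where
  "NN a b = (a + b) choose b"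

text \<open>NN_pred a b = N(a, b-1), with N(a,-1) = 0.\<close>
definition NN_pred :: "nat \<Rightarrow> nat \<Rightarrow> nat" where
  "NN_pred a b = (if b = 0 then 0 else NN a (b - 1))"

definition multi_idx :: "nat \<Rightarrow> nat \<Rightarrow> nat list set" where
  "multi_idx n d = {j. length j = n \<and> sum_list j \<le> d}"

definition monom_pow :: "real vec \<Rightarrow> nat list \<Rightarrow> real" where
  "monom_pow x j = (\<Prod>k<length j. (x $ k) ^ (j ! k))"

definition vandermonde :: "nat \<Rightarrow> (nat \<Rightarrow> nat list) \<Rightarrow> (nat \<Rightarrow> real vec) \<Rightarrow> real mat" where
  "vandermonde M e a = mat M M (\<lambda>(i, l). monom_pow (a i) (e l))"

definition scale_coord :: "nat \<Rightarrow> real \<Rightarrow> real vec \<Rightarrow> real vec" where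
  "scale_coord p t x = vec (dim_vec x) (\<lambda>k. if k = p then t * x $ k else x $ k)"

end

theory Submission
  imports Defs
begin

text \<open>If every coordinate of a map \<open>f\<close> of \<open>\<real>\<^sup>n\<close> is affine, every monomial of degree at most
  \<open>d\<close> composed with \<open>f\<close> is a combination of such monomials, so \<open>V(f(A)) = V(A) C\<^sub>f\<close> and
  \<open>Det V(f(A)) = c\<^sub>f Det V(A)\<close> with \<open>c\<^sub>f = det C\<^sub>f\<close> independent of \<open>A\<close>. For the scaling of
  the \<open>p\<close>-th coordinate by \<open>t\<close> the matrix \<open>C\<^sub>f\<close> is diagonal with entries \<open>t ^ j\<^sub>p\<close>, and the
  \<open>p\<close>-th exponents of all multi-indices sum to \<open>N(n+1,d-1)\<close>. Translations and transvections
  have \<open>c\<^sub>f = 1\<close>: \<open>f \<circ> f\<close> is conjugate to \<open>f\<close> by a scaling, so \<open>c\<^sub>f\<^sup>2 = c\<^sub>f \<noteq> 0\<close>. Finally,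
  every square matrix is a product of identity matrices with one column replaced, and such a
  matrix is a transvection followed by the scaling of one coordinate by its determinant.\<close>

lemma finite_multi_idx: "finite (multi_idx n d)"
proof (rule finite_subset)
  show "multi_idx n d \<subseteq> {xs. set xs \<subseteq> {0..d} \<and> length xs = n}"
    unfolding multi_idx_def using member_le_sum_list by fastforce
  show "finite {xs. set xs \<subseteq> {0..d} \<and> length xs = n}"
    by (rule finite_lists_length_eq) auto
qed

lemma multi_idx_Suc:
  "multi_idx (Suc n) d = (\<lambda>(k, j). k # j) ` (SIGMA k:{..d}. multi_idx n (d - k))"
proof (intro Set.set_eqI iffI)
  fix xs assume "xs \<in> multi_idx (Suc n) d"
  then obtain k j where "xs = k # j" "length j = n" "k + sum_list j \<le> d"
    unfolding multi_idx_def by (cases xs) auto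
  then show "xs \<in> (\<lambda>(k, j). k # j) ` (SIGMA k:{..d}. multi_idx n (d - k))"
    unfolding multi_idx_def by (auto intro!: image_eqI[of _ _ "(k, j)"])
qed (auto simp: multi_idx_def)

lemma card_multi_idx: "card (multi_idx n d) = NN n d"
proof (induction n arbitrary: d)
  case 0
  have "multi_idx 0 d = {[]}" unfolding multi_idx_def by auto
  then show ?case by (simp add: NN_def)
next
  case (Suc n)
  have "inj_on (\<lambda>(k, j). k # j) (SIGMA k:{..d}. multi_idx n (d - k))"
    by (auto simp: inj_on_def)
  then have "card (multi_idx (Suc n) d) = card (SIGMA k:{..d}. multi_idx n (d - k))"
    unfolding multi_idx_Suc by (rule card_image)
  also have "\<dots> = (\<Sum>k\<le>d. (n + (d - k)) choose (d - k))"
    using Suc by (simp add: finite_multi_idx NN_def)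
  also have "\<dots> = (\<Sum>k\<le>d. (n + k) choose k)"
    by (rule sum.reindex_bij_witness[of _ "\<lambda>k. d - k" "\<lambda>k. d - k"]) auto
  also have "\<dots> = NN (Suc n) d" by (simp add: sum_choose_lower NN_def)
  finally show ?case .
qed

text \<open>Raising the \<open>p\<close>-th exponent by one maps the multi-indices of degree at most \<open>d\<close>
  bijectively onto those of degree at most \<open>d + 1\<close> with positive \<open>p\<close>-th exponent.\<close>

lemma sum_nth_multi_idx:
  assumes "p < n"
  shows "(\<Sum>j\<in>multi_idx n d. j ! p) = NN_pred (n + 1) d"
proof (induction d)
  case 0
  have "j ! p = 0" if "j \<in> multi_idx n 0" for j
    using that assms unfolding multi_idx_def by (auto simp: elem_le_sum_list)
  then show ?case by (simp add: NN_pred_def)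
next
  case (Suc d)
  let ?inc = "\<lambda>j. j[p := j ! p + 1]" and ?dec = "\<lambda>j. j[p := j ! p - 1]"
  have "(\<Sum>j\<in>multi_idx n (Suc d). j ! p) = (\<Sum>j\<in>{j \<in> multi_idx n (Suc d). j ! p \<noteq> 0}. j ! p)"
    by (rule sum.mono_neutral_right) (auto simp: finite_multi_idx)
  also have "\<dots> = (\<Sum>j\<in>multi_idx n d. j ! p + 1)"
  proof (rule sum.reindex_bij_witness[of _ ?inc ?dec])
    fix j assume "j \<in> {j \<in> multi_idx n (Suc d). j ! p \<noteq> 0}"
    then have j: "length j = n" "sum_list j \<le> Suc d" "j ! p \<noteq> 0" unfolding multi_idx_def by auto
    then show "?dec j \<in> multi_idx n d"
      using assms unfolding multi_idx_def by (simp add: sum_list_update)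
    show "?inc (?dec j) = j" "?dec j ! p + 1 = j ! p" using j assms by simp_all
  next
    fix j assume "j \<in> multi_idx n d"
    then have j: "length j = n" "sum_list j \<le> d" unfolding multi_idx_def by auto
    then show "?inc j \<in> {j \<in> multi_idx n (Suc d). j ! p \<noteq> 0}"
      using assms unfolding multi_idx_def by (simp add: sum_list_update)
    show "?dec (?inc j) = j" using j assms by simp
  qed
  also have "\<dots> = NN_pred (n + 1) d + NN n d"
    using Suc by (simp add: sum_Suc card_multi_idx)
  also have "\<dots> = NN_pred (n + 1) (Suc d)"
    by (cases d) (simp_all add: NN_pred_def NN_def)
  finally show ?case .
qed

lemma sum_list_map2_plus:
  "length j = length k \<Longrightarrow> sum_list (map2 (+) j k) = sum_list j + sum_list (k :: nat list)"
proof (induction j arbitrary: k)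
  case (Cons a j)
  then show ?case by (cases k) auto
qed simp

lemma monom_pow_mult:
  "length j = length k \<Longrightarrow> monom_pow x j * monom_pow x k = monom_pow x (map2 (+) j k)"
  unfolding monom_pow_def by (simp add: prod.distrib[symmetric] power_add)

lemma monom_pow_replicate_0: "monom_pow x (replicate n 0) = 1"
  unfolding monom_pow_def by simp

lemma monom_pow_scale_coord:
  assumes "length j = n" "dim_vec x = n" "p < n"
  shows "monom_pow (scale_coord p t x) j = t ^ (j ! p) * monom_pow x j"
proof -
  have "monom_pow (scale_coord p t x) j
      = (\<Prod>k<n. (if k = p then t ^ (j ! p) else 1) * x $ k ^ (j ! k))"
    unfolding monom_pow_def scale_coord_def using assms
    by (intro prod.cong) (auto simp: power_mult_distrib)
  also have "\<dots> = t ^ (j ! p) * monom_pow x j"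
    unfolding monom_pow_def prod.distrib using assms by simp
  finally show ?thesis .
qed

text \<open>\<open>poly_fun n d g\<close>: on \<open>carrier_vec n\<close>, \<open>g\<close> agrees with a real polynomial in \<open>n\<close>
  variables of total degree at most \<open>d\<close>.\<close>

inductive poly_fun :: "nat \<Rightarrow> nat \<Rightarrow> (real vec \<Rightarrow> real) \<Rightarrow> bool" for n d where
  monom: "length j = n \<Longrightarrow> sum_list j \<le> d \<Longrightarrow> poly_fun n d (\<lambda>x. monom_pow x j)"
| add: "poly_fun n d g \<Longrightarrow> poly_fun n d h \<Longrightarrow> poly_fun n d (\<lambda>x. g x + h x)"
| smult: "poly_fun n d g \<Longrightarrow> poly_fun n d (\<lambda>x. c * g x)"
| cong: "poly_fun n d g \<Longrightarrow> (\<And>x. x \<in> carrier_vec n \<Longrightarrow> g x = h x) \<Longrightarrow>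
    poly_fun n d h"

lemma poly_fun_const: "poly_fun n d (\<lambda>x. c)"
proof -
  have "poly_fun n d (\<lambda>x. monom_pow x (replicate n 0))"
    by (rule poly_fun.monom) (auto simp: sum_list_replicate)
  from poly_fun.smult[OF this, of c] show ?thesis
    by (rule poly_fun.cong) (simp add: monom_pow_replicate_0)
qed

lemma poly_fun_mono: "poly_fun n a g \<Longrightarrow> a \<le> b \<Longrightarrow> poly_fun n b g"
proof (induction rule: poly_fun.induct)
  case (monom j)
  then show ?case by (intro poly_fun.monom) auto
next
  case (add g h)
  then show ?case by (intro poly_fun.add) auto
next
  case (smult g c)
  then show ?case by (intro poly_fun.smult) auto
next
  case (cong g h)
  then show ?case by (meson poly_fun.cong)
qed

lemma poly_fun_mult_monom:
  assumes "poly_fun n b h" "length j = n" "sum_list j \<le> a"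
  shows "poly_fun n (a + b) (\<lambda>x. monom_pow x j * h x)"
  using assms(1)
proof (induction rule: poly_fun.induct)
  case (monom k)
  have "poly_fun n (a + b) (\<lambda>x. monom_pow x (map2 (+) j k))"
    by (rule poly_fun.monom) (use monom assms in \<open>auto simp: sum_list_map2_plus\<close>)
  then show ?case by (rule poly_fun.cong) (use monom assms in \<open>simp add: monom_pow_mult\<close>)
next
  case (add g h)
  from poly_fun.add[OF add.IH] show ?case by (rule poly_fun.cong) (simp add: algebra_simps)
next
  case (smult g c)
  from poly_fun.smult[OF smult.IH, of c] show ?case by (rule poly_fun.cong) (simp add: algebra_simps)
next
  case (cong g h)
  from cong.IH show ?case by (rule poly_fun.cong) (use cong in auto)
qed

lemma poly_fun_mult:
  assumes "poly_fun n a g" "poly_fun n b h"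
  shows "poly_fun n (a + b) (\<lambda>x. g x * h x)"
  using assms(1)
proof (induction rule: poly_fun.induct)
  case (monom j)
  then show ?case using poly_fun_mult_monom[OF assms(2)] by auto
next
  case (add g1 g2)
  from poly_fun.add[OF add.IH] show ?case by (rule poly_fun.cong) (simp add: algebra_simps)
next
  case (smult g c)
  from poly_fun.smult[OF smult.IH, of c] show ?case by (rule poly_fun.cong) (simp add: algebra_simps)
next
  case (cong g1 g2)
  from cong.IH show ?case by (rule poly_fun.cong) (use cong in auto)
qed

lemma poly_fun_power: "poly_fun n a g \<Longrightarrow> poly_fun n (a * m) (\<lambda>x. g x ^ m)"
proof (induction m)
  case 0
  then show ?case using poly_fun_const[of n 0 1] by simp
next
  case (Suc m)
  from poly_fun_mult[OF Suc.prems Suc.IH[OF Suc.prems]] show ?case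
    by (simp add: algebra_simps)
qed

lemma poly_fun_sum:
  "(\<And>i. i < (m :: nat) \<Longrightarrow> poly_fun n d (g i)) \<Longrightarrow> poly_fun n d (\<lambda>x. \<Sum>i<m. g i x)"
  by (induction m) (auto intro: poly_fun.add poly_fun_const[of n d 0, simplified])

lemma poly_fun_prod:
  "(\<And>i. i < (m :: nat) \<Longrightarrow> poly_fun n (a i) (g i)) \<Longrightarrow>
    poly_fun n (\<Sum>i<m. a i) (\<lambda>x. \<Prod>i<m. g i x)"
proof (induction m)
  case 0
  then show ?case using poly_fun_const[of n 0 1] by simp
next
  case (Suc m)
  have "poly_fun n (\<Sum>i<m. a i) (\<lambda>x. \<Prod>i<m. g i x)" by (rule Suc.IH) (use Suc.prems in auto)
  from poly_fun_mult[OF this Suc.prems[of m]] show ?case by (simp add: mult.commute)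
qed

lemma poly_fun_coord:
  assumes "p < n"
  shows "poly_fun n 1 (\<lambda>x. x $ p)"
proof -
  let ?j = "(replicate n 0)[p := 1]"
  have "poly_fun n 1 (\<lambda>x. monom_pow x ?j)"
    by (rule poly_fun.monom) (use assms in \<open>simp_all add: sum_list_update\<close>)
  moreover have "monom_pow x ?j = x $ p" for x
  proof -
    have "monom_pow x ?j = (\<Prod>k<n. if k = p then x $ p else 1)"
      unfolding monom_pow_def using assms by (intro prod.cong) auto
    then show ?thesis using assms by simp
  qed
  ultimately show ?thesis by simp
qed

lemma poly_fun_affine_coord:
  assumes "P \<in> carrier_mat n n" "c \<in> carrier_vec n" "k < n"
  shows "poly_fun n 1 (\<lambda>x. (P *\<^sub>v x + c) $ k)"
proof -
  have "poly_fun n 1 (\<lambda>x. (\<Sum>l<n. P $$ (k, l) * x $ l) + c $ k)"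
    by (intro poly_fun.add poly_fun_sum poly_fun.smult poly_fun_coord poly_fun_const)
  then show ?thesis
    by (rule poly_fun.cong) (use assms in \<open>auto simp: scalar_prod_def atLeast0LessThan\<close>)
qed

lemma poly_fun_monom_pow_comp:
  assumes f: "\<And>k. k < n \<Longrightarrow> poly_fun n 1 (\<lambda>x. f x $ k)" and j: "j \<in> multi_idx n d"
  shows "poly_fun n d (\<lambda>x. monom_pow (f x) j)"
proof -
  from j have len: "length j = n" and deg: "sum_list j \<le> d" unfolding multi_idx_def by auto
  have "poly_fun n (\<Sum>k<n. 1 * j ! k) (\<lambda>x. \<Prod>k<n. (f x $ k) ^ (j ! k))"
    by (intro poly_fun_prod poly_fun_power f)
  moreover have "(\<Sum>k<n. 1 * j ! k) = sum_list j"
    using len by (simp add: sum_list_sum_nth atLeast0LessThan)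
  ultimately have "poly_fun n d (\<lambda>x. \<Prod>k<n. (f x $ k) ^ (j ! k))"
    using poly_fun_mono[OF _ deg] by simp
  then show ?thesis unfolding monom_pow_def len .
qed

lemma poly_fun_in_monomial_span:
  assumes e: "bij_betw e {..<N :: nat} (multi_idx n d)" and "poly_fun n d g"
  shows "\<exists>c. \<forall>x \<in> carrier_vec n. g x = (\<Sum>l<N. c l * monom_pow x (e l))"
  using assms(2)
proof (induction rule: poly_fun.induct)
  case (monom j)
  then have "j \<in> multi_idx n d" unfolding multi_idx_def by auto
  then obtain l0 where l0: "l0 < N" "e l0 = j"
    using e unfolding bij_betw_def by force
  have "(\<Sum>l<N. of_bool (l = l0) * monom_pow x (e l)) = monom_pow x j" for x
    using l0 by (simp add: of_bool_def if_distrib[of "\<lambda>c. c * _"] cong: if_cong)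
  then show ?case by (intro exI[of _ "\<lambda>l. of_bool (l = l0)"]) simp
next
  case (add g h)
  then obtain c1 c2 where "\<forall>x \<in> carrier_vec n. g x = (\<Sum>l<N. c1 l * monom_pow x (e l))"
    "\<forall>x \<in> carrier_vec n. h x = (\<Sum>l<N. c2 l * monom_pow x (e l))" by blast
  then show ?case
    by (intro exI[of _ "\<lambda>l. c1 l + c2 l"]) (simp add: sum.distrib distrib_right)
next
  case (smult g c)
  then obtain c1 where "\<forall>x \<in> carrier_vec n. g x = (\<Sum>l<N. c1 l * monom_pow x (e l))" by blast
  then show ?case
    by (intro exI[of _ "\<lambda>l. c * c1 l"]) (simp add: sum_distrib_left mult.assoc)
next
  case (cong g h)
  then show ?case by metis
qed

definition vandermonde_multiplier ::
    "nat \<Rightarrow> (nat \<Rightarrow> nat list) \<Rightarrow> nat \<Rightarrow> (real vec \<Rightarrow> real vec) \<Rightarrow> real \<Rightarrow> bool" where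
  "vandermonde_multiplier N e n f k \<longleftrightarrow> (\<forall>b. (\<forall>i<N. b i \<in> carrier_vec n) \<longrightarrow>
     det (vandermonde N e (\<lambda>i. f (b i))) = k * det (vandermonde N e b))"

lemma vandermonde_multiplierD:
  "vandermonde_multiplier N e n f k \<Longrightarrow> (\<And>i. i < N \<Longrightarrow> b i \<in> carrier_vec n) \<Longrightarrow>
    det (vandermonde N e (\<lambda>i. f (b i))) = k * det (vandermonde N e b)"
  unfolding vandermonde_multiplier_def by blast

lemma vandermonde_carrier: "vandermonde N e b \<in> carrier_mat N N"
  unfolding vandermonde_def by simp

lemma vandermonde_multiplier_id: "vandermonde_multiplier N e n (\<lambda>x. x) 1"
  unfolding vandermonde_multiplier_def by simp

lemma vandermonde_multiplier_comp:
  assumes "vandermonde_multiplier N e n f k1" "vandermonde_multiplier N e n g k2"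
    and "\<And>x. x \<in> carrier_vec n \<Longrightarrow> f x \<in> carrier_vec n"
  shows "vandermonde_multiplier N e n (\<lambda>x. g (f x)) (k2 * k1)"
  using assms unfolding vandermonde_multiplier_def by simp

lemma vandermonde_multiplier_cong:
  assumes "vandermonde_multiplier N e n f k" "\<And>x. x \<in> carrier_vec n \<Longrightarrow> f x = g x"
  shows "vandermonde_multiplier N e n g k"
proof -
  have "vandermonde N e (\<lambda>i. g (b i)) = vandermonde N e (\<lambda>i. f (b i))"
    if "\<forall>i<N. b i \<in> carrier_vec n" for b
    using that assms(2) unfolding vandermonde_def by (intro eq_matI) auto
  then show ?thesis using assms(1) unfolding vandermonde_multiplier_def by simp
qed

lemma vandermonde_multiplier_affine:
  assumes e: "bij_betw e {..<N} (multi_idx n d)"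
    and P: "P \<in> carrier_mat n n" and c: "c \<in> carrier_vec n"
    and f: "\<And>x. x \<in> carrier_vec n \<Longrightarrow> f x = P *\<^sub>v x + c"
  shows "\<exists>k. vandermonde_multiplier N e n f k"
proof -
  have "poly_fun n 1 (\<lambda>x. f x $ k)" if "k < n" for k
    using poly_fun_affine_coord[OF P c that] by (rule poly_fun.cong) (simp add: f)
  then have "\<forall>l. l < N \<longrightarrow> (\<exists>c. \<forall>x \<in> carrier_vec n.
      monom_pow (f x) (e l) = (\<Sum>l'<N. c l' * monom_pow x (e l')))"
    using e by (intro allI impI poly_fun_in_monomial_span[OF e] poly_fun_monom_pow_comp)
      (auto simp: bij_betw_def)
  then obtain cf where cf: "\<And>l x. l < N \<Longrightarrow> x \<in> carrier_vec n \<Longrightarrow>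
      monom_pow (f x) (e l) = (\<Sum>l'<N. cf l l' * monom_pow x (e l'))"
    unfolding choice_iff' by blast
  define C where "C = mat N N (\<lambda>(l', l). cf l l')"
  have C: "C \<in> carrier_mat N N" unfolding C_def by simp
  have "vandermonde N e (\<lambda>i. f (b i)) = vandermonde N e b * C"
    if b: "\<forall>i<N. b i \<in> carrier_vec n" for b
  proof (rule eq_matI)
    fix i l assume "i < dim_row (vandermonde N e b * C)" "l < dim_col (vandermonde N e b * C)"
    then have i: "i < N" and l: "l < N" using C by (auto simp: vandermonde_def)
    have "(vandermonde N e b * C) $$ (i, l) = (\<Sum>l'<N. monom_pow (b i) (e l') * cf l l')"
      using i l C by (simp add: vandermonde_def C_def scalar_prod_def atLeast0LessThan)
    also have "\<dots> = monom_pow (f (b i)) (e l)"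
      using cf[OF l] b i by (simp add: mult.commute)
    finally show "vandermonde N e (\<lambda>i. f (b i)) $$ (i, l) = (vandermonde N e b * C) $$ (i, l)"
      using i l by (simp add: vandermonde_def)
  qed (use C in \<open>auto simp: vandermonde_def\<close>)
  then have "vandermonde_multiplier N e n f (det C)"
    unfolding vandermonde_multiplier_def
    by (simp add: det_mult[OF vandermonde_carrier C] mult.commute)
  then show ?thesis ..
qed

lemma vandermonde_multiplier_scale_coord:
  assumes e: "bij_betw e {..<NN n d} (multi_idx n d)" and p: "p < n"
  shows "vandermonde_multiplier (NN n d) e n (scale_coord p t) (t ^ NN_pred (n + 1) d)"
proof -
  let ?N = "NN n d"
  define D where "D = mat ?N ?N (\<lambda>(i, j). if i = j then t ^ (e j ! p) else 0)"
  have D: "D \<in> carrier_mat ?N ?N" unfolding D_def by simp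
  have len: "length (e l) = n" if "l < ?N" for l
    using e that unfolding bij_betw_def multi_idx_def by auto
  have scale: "vandermonde ?N e (\<lambda>i. scale_coord p t (b i)) = vandermonde ?N e b * D"
    if b: "\<forall>i<?N. b i \<in> carrier_vec n" for b
  proof (rule eq_matI)
    fix i l assume "i < dim_row (vandermonde ?N e b * D)" "l < dim_col (vandermonde ?N e b * D)"
    then have i: "i < ?N" and l: "l < ?N" using D by (auto simp: vandermonde_def)
    have "(vandermonde ?N e b * D) $$ (i, l)
        = (\<Sum>l'<?N. monom_pow (b i) (e l') * (if l' = l then t ^ (e l ! p) else 0))"
      using i l D by (simp add: vandermonde_def D_def scalar_prod_def atLeast0LessThan)
    also have "\<dots> = (\<Sum>l'<?N. if l' = l then monom_pow (b i) (e l) * t ^ (e l ! p) else 0)"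
      by (intro sum.cong) auto
    also have "\<dots> = monom_pow (b i) (e l) * t ^ (e l ! p)"
      using l by simp
    also have "\<dots> = monom_pow (scale_coord p t (b i)) (e l)"
      using monom_pow_scale_coord[OF len[OF l] _ p] b i by simp
    finally show "vandermonde ?N e (\<lambda>i. scale_coord p t (b i)) $$ (i, l)
        = (vandermonde ?N e b * D) $$ (i, l)"
      using i l by (simp add: vandermonde_def)
  qed (use D in \<open>auto simp: vandermonde_def\<close>)
  have "det D = (\<Prod>l<?N. t ^ (e l ! p))"
    by (subst det_upper_triangular[OF _ D]) (auto simp: D_def prod_list_diag_prod atLeast0LessThan)
  also have "\<dots> = t ^ (\<Sum>l<?N. e l ! p)" by (simp add: power_sum)
  also have "(\<Sum>l<?N. e l ! p) = (\<Sum>j\<in>multi_idx n d. j ! p)"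
    using sum.reindex_bij_betw[OF e, of "\<lambda>j. j ! p"] by simp
  finally have det_D: "det D = t ^ NN_pred (n + 1) d" by (simp add: sum_nth_multi_idx[OF p])
  show ?thesis unfolding vandermonde_multiplier_def
    by (auto simp: scale det_mult[OF vandermonde_carrier D] det_D mult.commute)
qed

lemma vandermonde_multiplier_unique:
  assumes "vandermonde_multiplier N e n f k1" "vandermonde_multiplier N e n f k2"
    and "\<forall>i<N. b i \<in> carrier_vec n" "det (vandermonde N e b) \<noteq> 0"
  shows "k1 = k2"
proof -
  have "det (vandermonde N e (\<lambda>i. f (b i))) = k1 * det (vandermonde N e b)"
    and "det (vandermonde N e (\<lambda>i. f (b i))) = k2 * det (vandermonde N e b)"
    using assms(1-3) unfolding vandermonde_multiplier_def by blast+
  then show ?thesis using assms(4) by simp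
qed

text \<open>If \<open>f\<close> is invertible and \<open>f \<circ> f\<close> is conjugate to \<open>f\<close> by an invertible map,
  multiplicativity gives \<open>k\<^sub>f\<^sup>2 = k\<^sub>f \<noteq> 0\<close>, hence \<open>k\<^sub>f = 1\<close>, without computing any
  coefficients. If no configuration has \<open>Det V \<noteq> 0\<close>, every constant is a multiplier.\<close>

lemma vandermonde_multiplier_eq_one:
  assumes f: "vandermonde_multiplier N e n f kf" and f': "vandermonde_multiplier N e n f' kf'"
    and g: "vandermonde_multiplier N e n g kg" and h: "vandermonde_multiplier N e n h kh"
    and dim_f: "\<And>x. x \<in> carrier_vec n \<Longrightarrow> f x \<in> carrier_vec n"
    and dim_h: "\<And>x. x \<in> carrier_vec n \<Longrightarrow> h x \<in> carrier_vec n"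
    and inv_f: "\<And>x. x \<in> carrier_vec n \<Longrightarrow> f' (f x) = x"
    and inv_h: "\<And>x. x \<in> carrier_vec n \<Longrightarrow> g (h x) = x"
    and conj: "\<And>x. x \<in> carrier_vec n \<Longrightarrow> f (f x) = g (f (h x))"
  shows "vandermonde_multiplier N e n f 1"
proof (cases "\<exists>b. (\<forall>i<N. b i \<in> carrier_vec n) \<and> det (vandermonde N e b) \<noteq> 0")
  case True
  then obtain b where b: "\<forall>i<N. b i \<in> carrier_vec n" "det (vandermonde N e b) \<noteq> 0" by blast
  note unique = vandermonde_multiplier_unique[OF _ _ b]
  have "vandermonde_multiplier N e n (\<lambda>x. x) (kf' * kf)"
    by (intro vandermonde_multiplier_cong[OF vandermonde_multiplier_comp[OF f f' dim_f]] inv_f)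
  from unique[OF this vandermonde_multiplier_id] have inv_kf: "kf' * kf = 1" .
  have "vandermonde_multiplier N e n (\<lambda>x. x) (kg * kh)"
    by (intro vandermonde_multiplier_cong[OF vandermonde_multiplier_comp[OF h g dim_h]] inv_h)
  from unique[OF this vandermonde_multiplier_id] have inv_kh: "kg * kh = 1" .
  have "vandermonde_multiplier N e n (\<lambda>x. g (f (h x))) (kg * (kf * kh))"
    by (rule vandermonde_multiplier_comp[OF vandermonde_multiplier_comp[OF h f dim_h] g])
      (simp_all add: dim_f dim_h)
  then have "vandermonde_multiplier N e n (\<lambda>x. f (f x)) (kg * (kf * kh))"
    by (rule vandermonde_multiplier_cong) (simp add: conj)
  from unique[OF vandermonde_multiplier_comp[OF f f dim_f] this]
  have "kf * kf = kf * (kg * kh)" by (simp add: ac_simps)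
  then have "kf' * kf * kf = kf' * kf" by (simp add: inv_kh mult.assoc)
  then have "kf = 1" by (simp add: inv_kf)
  with f show ?thesis by simp
next
  case False
  then have "det (vandermonde N e b) = 0" if "\<forall>i<N. b i \<in> carrier_vec n" for b
    using that by blast
  then show ?thesis unfolding vandermonde_multiplier_def by (simp add: dim_f)
qed

lemma vandermonde_multiplier_translate:
  assumes e: "bij_betw e {..<N} (multi_idx n d)" and v: "v \<in> carrier_vec n"
  shows "vandermonde_multiplier N e n (\<lambda>x. x - v) 1"
proof -
  have "\<exists>k. vandermonde_multiplier N e n (\<lambda>x. x + c) k" if "c \<in> carrier_vec n" for c
    by (rule vandermonde_multiplier_affine[OF e one_carrier_mat that]) auto
  moreover have "\<exists>k. vandermonde_multiplier N e n (\<lambda>x. s \<cdot>\<^sub>v x) k" for s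
    by (rule vandermonde_multiplier_affine[OF e smult_carrier_mat[OF one_carrier_mat] zero_carrier_vec])
      auto
  ultimately obtain kf kf' kg kh where
    "vandermonde_multiplier N e n (\<lambda>x. x + - v) kf"
    "vandermonde_multiplier N e n (\<lambda>x. x + v) kf'"
    "vandermonde_multiplier N e n (\<lambda>x. 2 \<cdot>\<^sub>v x) kg"
    "vandermonde_multiplier N e n (\<lambda>x. (1 / 2) \<cdot>\<^sub>v x) kh"
    using v by (meson uminus_carrier_vec)
  then have "vandermonde_multiplier N e n (\<lambda>x. x + - v) 1"
    by (rule vandermonde_multiplier_eq_one) (use v in \<open>auto\<close>)
  then show ?thesis
    by (rule vandermonde_multiplier_cong) (use v in \<open>auto\<close>)
qed


lemma replace_col_one_carrier: "replace_col (1\<^sub>m n) w k \<in> carrier_mat n n"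
  by (simp add: replace_col_def)

lemma col_replace_col_one:
  assumes "j < n" "w \<in> carrier_vec n"
  shows "col (replace_col (1\<^sub>m n) w k) j = (if j = k then w else unit_vec n j)"
  using assms by (intro eq_vecI) (auto simp: replace_col_def)

lemma replace_col_one_mult_vec:
  fixes w x :: "'a :: comm_ring_1 vec"
  assumes "w \<in> carrier_vec n" "x \<in> carrier_vec n" "k < n"
  shows "replace_col (1\<^sub>m n) w k *\<^sub>v x = x + x $ k \<cdot>\<^sub>v (w - unit_vec n k)"
proof (rule eq_vecI)
  fix i assume "i < dim_vec (x + x $ k \<cdot>\<^sub>v (w - unit_vec n k))"
  then have i: "i < n" using assms by simp
  have "(replace_col (1\<^sub>m n) w k *\<^sub>v x) $ i
      = (\<Sum>j<n. (if j = k then w $ i * x $ k else 0) + (if j = i \<and> i \<noteq> k then x $ j else 0))"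
    using i assms by (auto simp: replace_col_def scalar_prod_def atLeast0LessThan intro!: sum.cong)
  also have "\<dots> = (x + x $ k \<cdot>\<^sub>v (w - unit_vec n k)) $ i"
    using i assms by (auto simp: sum.distrib algebra_simps)
  finally show "(replace_col (1\<^sub>m n) w k *\<^sub>v x) $ i = (x + x $ k \<cdot>\<^sub>v (w - unit_vec n k)) $ i" .
qed (use assms in \<open>auto simp: replace_col_def\<close>)

lemma det_replace_col_one:
  assumes "w \<in> carrier_vec n" "k < n"
  shows "det (replace_col (1\<^sub>m n) w k) = w $ k"
  using cramer_lemma_mat[of "1\<^sub>m n" n w k] assms by simp

lemma replace_col_one_unit: "replace_col (1\<^sub>m n) (unit_vec n k) k = 1\<^sub>m n"
  by (intro eq_matI) (auto simp: replace_col_def)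

lemma replace_col_one_mult:
  fixes a b :: "'a :: comm_ring_1 vec"
  assumes "a \<in> carrier_vec n" "b \<in> carrier_vec n" "k < n"
  shows "replace_col (1\<^sub>m n) a k * replace_col (1\<^sub>m n) b k
    = replace_col (1\<^sub>m n) (replace_col (1\<^sub>m n) a k *\<^sub>v b) k"
proof (rule mat_col_eqI)
  fix j assume "j < dim_col (replace_col (1\<^sub>m n) (replace_col (1\<^sub>m n) a k *\<^sub>v b) k)"
  then have j: "j < n" by (simp add: replace_col_def)
  note C = replace_col_one_carrier[of n _ k]
  show "col (replace_col (1\<^sub>m n) a k * replace_col (1\<^sub>m n) b k) j
     = col (replace_col (1\<^sub>m n) (replace_col (1\<^sub>m n) a k *\<^sub>v b) k) j"
    using j assms
    by (auto simp: col_mult2[OF C C j] col_replace_col_one replace_col_one_mult_vec)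
qed (auto simp: replace_col_def)

lemma mult_replace_col_one:
  fixes B :: "'a :: comm_ring_1 mat"
  assumes "B \<in> carrier_mat n n" "u \<in> carrier_vec n" "k < n"
  shows "B * replace_col (1\<^sub>m n) u k = replace_col B (B *\<^sub>v u) k"
proof (rule eq_matI)
  fix i j assume "i < dim_row (replace_col B (B *\<^sub>v u) k)" "j < dim_col (replace_col B (B *\<^sub>v u) k)"
  then have ij: "i < n" "j < n" using assms by (auto simp: replace_col_def)
  show "(B * replace_col (1\<^sub>m n) u k) $$ (i, j) = replace_col B (B *\<^sub>v u) k $$ (i, j)"
  proof (cases "j = k")
    case True
    then show ?thesis using ij assms by (simp add: replace_col_def scalar_prod_def)
  next
    case False
    have "(B * replace_col (1\<^sub>m n) u k) $$ (i, j) = (\<Sum>l<n. B $$ (i, l) * (if l = j then 1 else 0))"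
      using ij assms False by (simp add: replace_col_def scalar_prod_def atLeast0LessThan)
    also have "\<dots> = (\<Sum>l<n. if l = j then B $$ (i, l) else 0)"
      by (rule sum.cong) simp_all
    also have "\<dots> = B $$ (i, j)"
      using ij by simp
    finally show ?thesis using ij assms False by (simp add: replace_col_def)
  qed
qed (use assms in \<open>auto simp: replace_col_def\<close>)

text \<open>By induction on the
  number of trailing unit columns: column \<open>k\<close> is turned into \<open>e\<^sub>k\<close> by an invertible column
  replacement on the left once it has a pivot at row \<open>k\<close> (which row operations with a row
  above provide), and it is split off on the right if its entries at rows \<open>\<le> k\<close> vanish.\<close>

context
  fixes n :: nat and Q :: "'a :: field mat \<Rightarrow> bool"
  assumes one: "Q (1\<^sub>m n)"
    and mult: "\<And>A B. A \<in> carrier_mat n n \<Longrightarrow> B \<in> carrier_mat n n \<Longrightarrow>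
      Q A \<Longrightarrow> Q B \<Longrightarrow> Q (A * B)"
    and replace_col_one: "\<And>w k. w \<in> carrier_vec n \<Longrightarrow> k < n \<Longrightarrow>
      Q (replace_col (1\<^sub>m n) w k)"
begin

private abbreviation unit_cols_from :: "nat \<Rightarrow> 'a mat \<Rightarrow> bool" where
  "unit_cols_from k A \<equiv> \<forall>j. k \<le> j \<longrightarrow> j < n \<longrightarrow> col A j = unit_vec n j"

lemma mat_induct_step_pivot:
  assumes A: "A \<in> carrier_mat n n" and k: "k < n" and cols: "unit_cols_from (Suc k) A"
    and pivot: "A $$ (k, k) \<noteq> 0"
    and IH: "\<And>B. B \<in> carrier_mat n n \<Longrightarrow> unit_cols_from k B \<Longrightarrow> Q B"
  shows "Q A"
proof -
  let ?C = "\<lambda>u. replace_col (1\<^sub>m n) u k"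
  let ?v = "col A k"
  define w where "w = unit_vec n k - (1 / ?v $ k) \<cdot>\<^sub>v (?v - unit_vec n k)"
    \<comment> \<open>\<open>?C w\<close> is the inverse of \<open>?C ?v\<close>\<close>
  have v: "?v \<in> carrier_vec n" and w: "w \<in> carrier_vec n" using A by (auto simp: w_def)
  have vk: "?v $ k \<noteq> 0" using A k pivot by simp
  have "?C w *\<^sub>v ?v = unit_vec n k"
    using v w vk k by (intro eq_vecI) (auto simp: replace_col_one_mult_vec w_def field_simps)
  moreover have "?C ?v *\<^sub>v w = unit_vec n k"
    using v w vk k by (intro eq_vecI) (auto simp: replace_col_one_mult_vec w_def field_simps)
  ultimately have Cw_v: "?C w *\<^sub>v ?v = unit_vec n k" and inverse: "?C ?v * ?C w = 1\<^sub>m n"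
    by (simp_all add: replace_col_one_mult[OF v w k] replace_col_one_unit)
  define B where "B = ?C w * A"
  have B: "B \<in> carrier_mat n n" unfolding B_def by (rule mult_carrier_mat[OF replace_col_one_carrier A])
  have "unit_cols_from k B"
  proof (intro allI impI)
    fix j assume j: "k \<le> j" "j < n"
    have "col B j = ?C w *\<^sub>v col A j"
      unfolding B_def using A j by (simp add: col_mult2[OF replace_col_one_carrier A])
    then show "col B j = unit_vec n j"
      using cols j w k Cw_v by (cases "j = k") (auto simp: replace_col_one_mult_vec)
  qed
  then have "Q B" by (rule IH[OF B])
  have "?C ?v * B = (?C ?v * ?C w) * A"
    unfolding B_def by (rule assoc_mult_mat[OF replace_col_one_carrier replace_col_one_carrier A, symmetric])
  then have "?C ?v * B = A" using A by (simp add: inverse)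
  with mult[OF replace_col_one_carrier B replace_col_one[OF v k] \<open>Q B\<close>] show ?thesis by simp
qed

lemma mat_induct_step_zero_col:
  assumes A: "A \<in> carrier_mat n n" and k: "k < n" and cols: "unit_cols_from (Suc k) A"
    and zero: "\<And>i. i \<le> k \<Longrightarrow> A $$ (i, k) = 0"
    and IH: "\<And>B. B \<in> carrier_mat n n \<Longrightarrow> unit_cols_from k B \<Longrightarrow> Q B"
  shows "Q A"
proof -
  let ?v = "col A k"
  define B where "B = replace_col A (unit_vec n k) k"
  have v: "?v \<in> carrier_vec n" using A by auto
  have B: "B \<in> carrier_mat n n" using A by (simp add: B_def replace_col_def)
  have B_entry: "B $$ (i, l) = (if l = i then 1 else 0)" if "i < n" "k \<le> l" "l < n" for i l
    using cols that A by (cases "l = k")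
      (auto simp: B_def replace_col_def dest!: spec[of _ l] arg_cong[of _ _ "\<lambda>v. v $ i"])
  have "unit_cols_from k B"
    using B B_entry by auto
  then have "Q B" by (rule IH[OF B])
  have "B *\<^sub>v ?v = ?v"
  proof (rule eq_vecI)
    fix i assume "i < dim_vec ?v"
    then have i: "i < n" using A by simp
    have "(B *\<^sub>v ?v) $ i = (\<Sum>l<n. B $$ (i, l) * ?v $ l)"
      using A B i by (simp add: scalar_prod_def atLeast0LessThan)
    also have "\<dots> = (\<Sum>l<n. if l = i then if k < l then ?v $ l else 0 else 0)"
    proof (rule sum.cong)
      fix l assume "l \<in> {..<n}"
      then show "B $$ (i, l) * ?v $ l = (if l = i then if k < l then ?v $ l else 0 else 0)"
        using A i k zero B_entry[of i l] by (cases "k < l") auto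
    qed simp
    also have "\<dots> = ?v $ i" using A i k zero by auto
    finally show "(B *\<^sub>v ?v) $ i = ?v $ i" .
  qed (use A B in simp)
  then have "B * replace_col (1\<^sub>m n) ?v k = replace_col B ?v k"
    by (simp add: mult_replace_col_one[OF B v k])
  also have "\<dots> = A"
    unfolding B_def using A by (intro eq_matI) (auto simp: replace_col_def)
  finally have "B * replace_col (1\<^sub>m n) ?v k = A" .
  with mult[OF B replace_col_one_carrier \<open>Q B\<close> replace_col_one[OF v k]] show ?thesis by simp
qed

lemma mat_induct_step_pivot_above:
  assumes A: "A \<in> carrier_mat n n" and k: "k < n" and cols: "unit_cols_from (Suc k) A"
    and i: "i < k" "A $$ (i, k) \<noteq> 0" and pivot: "A $$ (k, k) = 0"
    and IH: "\<And>B. B \<in> carrier_mat n n \<Longrightarrow> unit_cols_from k B \<Longrightarrow> Q B"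
  shows "Q A"
proof -
  let ?E = "\<lambda>s :: 'a. replace_col (1\<^sub>m n) (unit_vec n i + s \<cdot>\<^sub>v unit_vec n k) i"
  have "i < n" using i k by simp
  define B where "B = ?E (-1) * A"
  have B: "B \<in> carrier_mat n n"
    unfolding B_def by (rule mult_carrier_mat[OF replace_col_one_carrier A])
  have col_B: "col B j = col A j - A $$ (i, j) \<cdot>\<^sub>v unit_vec n k" if "j < n" for j
    using A \<open>i < n\<close> that unfolding B_def
    by (auto simp: col_mult2[OF replace_col_one_carrier A] replace_col_one_mult_vec)
  have "A $$ (i, j) = 0" if "k < j" "j < n" for j
    using cols that A i by (auto dest!: spec[of _ j] arg_cong[of _ _ "\<lambda>v. v $ i"])
  then have "unit_cols_from (Suc k) B"
    using cols col_B by auto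
  moreover have "B $$ (k, k) \<noteq> 0"
    using col_B[of k] A B k i pivot by (auto dest!: arg_cong[of _ _ "\<lambda>v. v $ k"])
  ultimately have "Q B" by (intro mat_induct_step_pivot[OF B k _ _ IH])
  have "?E 1 *\<^sub>v (unit_vec n i + (-1) \<cdot>\<^sub>v unit_vec n k) = unit_vec n i"
    using \<open>i < n\<close> k i by (subst replace_col_one_mult_vec) auto
  then have "?E 1 * ?E (-1) = 1\<^sub>m n"
    using \<open>i < n\<close> k by (simp add: replace_col_one_mult replace_col_one_unit)
  then have "?E 1 * B = A"
    unfolding B_def using A
    by (simp add: assoc_mult_mat[OF replace_col_one_carrier replace_col_one_carrier A, symmetric])
  moreover have "Q (?E 1 * B)"
    using \<open>i < n\<close> k by (intro mult[OF replace_col_one_carrier B replace_col_one \<open>Q B\<close>]) auto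
  ultimately show ?thesis by simp
qed

lemma mat_induct_replace_col_one:
  assumes "A \<in> carrier_mat n n"
  shows "Q A"
proof -
  have "\<forall>A \<in> carrier_mat n n. unit_cols_from k A \<longrightarrow> Q A" for k
  proof (induction k)
    case 0
    have "A = 1\<^sub>m n" if "A \<in> carrier_mat n n" "unit_cols_from 0 A" for A
      using that by (intro mat_col_eqI) auto
    then show ?case using one by auto
  next
    case (Suc k)
    have IH: "\<And>B. B \<in> carrier_mat n n \<Longrightarrow> unit_cols_from k B \<Longrightarrow> Q B" using Suc by blast
    show ?case
    proof (intro ballI impI)
      fix A assume A: "A \<in> carrier_mat n n" and cols: "unit_cols_from (Suc k) A"
      show "Q A"
      proof (cases "k < n")
        case False
        then show ?thesis using IH A cols by auto
      next
        case k: True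
        consider "A $$ (k, k) \<noteq> 0" | i where "i < k" "A $$ (i, k) \<noteq> 0" "A $$ (k, k) = 0"
          | "\<And>i. i \<le> k \<Longrightarrow> A $$ (i, k) = 0"
          by (metis le_neq_implies_less)
        then show ?thesis
        proof cases
          case 1
          then show ?thesis by (rule mat_induct_step_pivot[OF A k cols _ IH])
        next
          case 2
          then show ?thesis by (rule mat_induct_step_pivot_above[OF A k cols _ _ _ IH])
        next
          case 3
          then show ?thesis by (rule mat_induct_step_zero_col[OF A k cols _ IH])
        qed
      qed
    qed
  qed
  from this[of n] assms show ?thesis by auto
qed

end

text \<open>The transvection \<open>x \<mapsto> x + x\<^sub>k (w - e\<^sub>k)\<close> (where \<open>w\<^sub>k = 1\<close>) squares to the
  transvection with twice the shift, which is its conjugate by the scaling \<open>x\<^sub>k \<mapsto> 2 x\<^sub>k\<close>.\<close>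

lemma vandermonde_multiplier_transvection:
  assumes e: "bij_betw e {..<N} (multi_idx n d)"
    and w: "w \<in> carrier_vec n" "w $ k = 1" and k: "k < n"
  shows "vandermonde_multiplier N e n (\<lambda>x. replace_col (1\<^sub>m n) w k *\<^sub>v x) 1"
proof -
  let ?T = "\<lambda>(u :: real vec) x. replace_col (1\<^sub>m n) u k *\<^sub>v x"
  have T: "?T u x = x + x $ k \<cdot>\<^sub>v (u - unit_vec n k)" if "u \<in> carrier_vec n" "x \<in> carrier_vec n" for u x
    using that k by (simp add: replace_col_one_mult_vec)
  have "\<exists>c. vandermonde_multiplier N e n (?T u) c" for u
    by (rule vandermonde_multiplier_affine[OF e replace_col_one_carrier[of n u k] zero_carrier_vec])
      (simp add: mult_mat_vec_carrier[OF replace_col_one_carrier])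
  then obtain kf kf' kg kh where
    "vandermonde_multiplier N e n (?T w) kf"
    "vandermonde_multiplier N e n (?T (2 \<cdot>\<^sub>v unit_vec n k - w)) kf'"
    "vandermonde_multiplier N e n (?T ((1 / 2) \<cdot>\<^sub>v unit_vec n k)) kg"
    "vandermonde_multiplier N e n (?T (2 \<cdot>\<^sub>v unit_vec n k)) kh"
    by metis
  then show ?thesis
    by (rule vandermonde_multiplier_eq_one) (use w k in \<open>auto simp: T\<close>)
qed

context
  fixes n d :: nat and e :: "nat \<Rightarrow> nat list"
  assumes e: "bij_betw e {..<NN n d} (multi_idx n d)"
begin

abbreviation vandermonde_det_power :: "real mat \<Rightarrow> bool" where
  "vandermonde_det_power P \<equiv>
     vandermonde_multiplier (NN n d) e n (\<lambda>x. P *\<^sub>v x) (det P ^ NN_pred (n + 1) d)"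

lemma vandermonde_det_power_one: "vandermonde_det_power (1\<^sub>m n)"
proof -
  have "vandermonde_multiplier (NN n d) e n (\<lambda>x. 1\<^sub>m n *\<^sub>v x) 1"
    by (rule vandermonde_multiplier_cong[OF vandermonde_multiplier_id]) simp
  then show ?thesis by simp
qed

lemma vandermonde_det_power_mult:
  assumes P: "P \<in> carrier_mat n n" and Q: "Q \<in> carrier_mat n n"
    and "vandermonde_det_power P" "vandermonde_det_power Q"
  shows "vandermonde_det_power (P * Q)"
proof -
  have "vandermonde_multiplier (NN n d) e n (\<lambda>x. P *\<^sub>v (Q *\<^sub>v x))
      (det P ^ NN_pred (n + 1) d * det Q ^ NN_pred (n + 1) d)"
    by (rule vandermonde_multiplier_comp[OF assms(4,3)]) (use Q in simp)
  then have "vandermonde_multiplier (NN n d) e n (\<lambda>x. (P * Q) *\<^sub>v x)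
      (det P ^ NN_pred (n + 1) d * det Q ^ NN_pred (n + 1) d)"
    by (rule vandermonde_multiplier_cong) (simp add: assoc_mult_mat_vec[OF P Q])
  then show ?thesis by (simp add: det_mult[OF P Q] power_mult_distrib)
qed

lemma vandermonde_det_power_replace_col_one:
  assumes w: "w \<in> carrier_vec n" and k: "k < n"
  shows "vandermonde_det_power (replace_col (1\<^sub>m n) w k)"
proof -
  define w1 where "w1 = w + (1 - w $ k) \<cdot>\<^sub>v unit_vec n k"
  have w1: "w1 \<in> carrier_vec n" "w1 $ k = 1" using w k by (auto simp: w1_def)
  have "vandermonde_multiplier (NN n d) e n
      (\<lambda>x. scale_coord k (w $ k) (replace_col (1\<^sub>m n) w1 k *\<^sub>v x)) (w $ k ^ NN_pred (n + 1) d * 1)"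
    by (rule vandermonde_multiplier_comp[OF vandermonde_multiplier_transvection[OF e w1 k]
        vandermonde_multiplier_scale_coord[OF e k]])
      (simp add: mult_mat_vec_carrier[OF replace_col_one_carrier])
  then have "vandermonde_multiplier (NN n d) e n (\<lambda>x. replace_col (1\<^sub>m n) w k *\<^sub>v x)
      (w $ k ^ NN_pred (n + 1) d * 1)"
    by (rule vandermonde_multiplier_cong)
      (use w w1 k in \<open>auto simp: replace_col_one_mult_vec scale_coord_def w1_def algebra_simps\<close>)
  then show ?thesis using w k by (simp add: det_replace_col_one)
qed

lemma vandermonde_det_power_all: "P \<in> carrier_mat n n \<Longrightarrow> vandermonde_det_power P"
  by (rule mat_induct_replace_col_one[of vandermonde_det_power, OF vandermonde_det_power_one
      vandermonde_det_power_mult vandermonde_det_power_replace_col_one])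

end

theorem proposition2p3:
  fixes n d :: nat and e :: "nat \<Rightarrow> nat list" and a :: "nat \<Rightarrow> real vec"
  assumes "n \<ge> 1"
    and e: "bij_betw e {..<NN n d} (multi_idx n d)"
    and dims: "\<And>i. i < NN n d \<Longrightarrow> dim_vec (a i) = n"
    and distinct: "inj_on a {..<NN n d}"
  shows "(\<forall>p<n. \<forall>t::real.
            det (vandermonde (NN n d) e (\<lambda>i. scale_coord p t (a i)))
              = t ^ NN_pred (n + 1) d * det (vandermonde (NN n d) e a))
       \<and> (\<forall>P \<in> carrier_mat n n.
            det (vandermonde (NN n d) e (\<lambda>i. P *\<^sub>v a i))
              = det P ^ NN_pred (n + 1) d * det (vandermonde (NN n d) e a))
       \<and> (\<forall>v \<in> carrier_vec n.
            det (vandermonde (NN n d) e (\<lambda>i. a i - v))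
              = det (vandermonde (NN n d) e a))"
proof (intro conjI allI impI ballI)
  have a: "a i \<in> carrier_vec n" if "i < NN n d" for i
    using dims[OF that] by (rule carrier_vecI)
  show "det (vandermonde (NN n d) e (\<lambda>i. scale_coord p t (a i)))
      = t ^ NN_pred (n + 1) d * det (vandermonde (NN n d) e a)" if "p < n" for p and t :: real
    by (rule vandermonde_multiplierD[OF vandermonde_multiplier_scale_coord[OF e that] a])
  show "det (vandermonde (NN n d) e (\<lambda>i. P *\<^sub>v a i))
      = det P ^ NN_pred (n + 1) d * det (vandermonde (NN n d) e a)" if "P \<in> carrier_mat n n" for P
    by (rule vandermonde_multiplierD[OF vandermonde_det_power_all[OF e that] a])
  show "det (vandermonde (NN n d) e (\<lambda>i. a i - v)) = det (vandermonde (NN n d) e a)"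
    if "v \<in> carrier_vec n" for v
    using vandermonde_multiplierD[OF vandermonde_multiplier_translate[OF e that] a] by simp
qed

end
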